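(* Assume the setting and Algorithm 1 described in the context, with $u_k$ $\mu$-strongly concave, and let $\lambda^*$ be a minimizer of $\varphi$ over $\mathbb{R}^m_+$. Then the iterates of Algorithm 1 started from any $\lambda^0\in\mathbb{R}^m_+$ satisfy, for all $t\ge 0$, $$\|z^t-\lambda^*\|_2\le\|\lambda^0-\lambda^*\|_2,\qquad \|y^t-\lambda^*\|_2\le\|\lambda^0-\lambda^*\|_2,\qquad \|\lambda^t-\lambda^*\|_2\le\|\lambda^0-\lambda^*\|_2 .$$
   Context: Setting: $m$ links, $n$ users, routing matrix $C\in\{0,1\}^{m\times n}$ with nonzero columns $C_k$, capacities $b\in\mathbb{R}^m$ with positive entries, utilities $u_k:\mathbb{R}_+\to\mathbb{R}$, $U(x)=\sum_k u_k(x_k)$. For $\lambda\in\mathbb{R}^m_+$: $x_k(\lambda)=\arg\max_{x_k\ge0}\{u_k(x_k)-x_k\langle\lambda,C_k\rangle\}$, $x(\lambda)=(x_k(\lambda))_k$, dual function $\varphi(\lambda)=\langle\lambda,b\rangle+\sum_k(u_k(x_k(\lambda))-x_k(\lambda)\langle\lambda,C_k\rangle)$. When each $u_k$ is $\mu$-strongly concave, $\varphi$ is convex and differentiable on $\mathbb{R}^m_+$ with $\nabla\varphi(\lambda)=b-Cx(\lambda)$, and $\nabla\varphi$ is $L$-Lipschitz with $L=nm^2/\mu$. $[\cdot]_+$ denotes componentwise positive part (projection onto $\mathbb{R}^m_+$). Algorithm 1 (primal-dual fast gradient method): coefficients $\alpha_t=\frac{t+1}{2}$, $A_t=\sum_{j=0}^t\alpha_j=\frac{(t+1)(t+2)}{4}$,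 $\tau_t=\frac{\alpha_{t+1}}{A_{t+1}}=\frac{2}{t+3}$. Given a starting point $\lambda^0\in\mathbb{R}^m_+$, for $t=0,1,\dots$: $y^t=[\lambda^t-\tfrac1L\nabla\varphi(\lambda^t)]_+$, $z^t=[\lambda^0-\tfrac1L\sum_{j=0}^t\alpha_j\nabla\varphi(\lambda^j)]_+$, $\lambda^{t+1}=\tau_t z^t+(1-\tau_t)y^t$. *)

theory Defs
  imports "HOL-Analysis.Analysis"
begin

text \<open>Links are indexed by a finite type 'm (m = CARD('m)), users by a finite type 'n
  (n = CARD('n)). Dual variables live in real^'m, the routing matrix is real^'n^'m,
  C_k = column k C.\<close>

definition strongly_concave_on :: "real set \<Rightarrow> real \<Rightarrow> (real \<Rightarrow> real) \<Rightarrow> bool" where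
  "strongly_concave_on S \<mu> f \<longleftrightarrow>
     (\<forall>x\<in>S. \<forall>y\<in>S. \<forall>t::real. 0 \<le> t \<and> t \<le> 1 \<longrightarrow>
        t * f x + (1 - t) * f y + \<mu> / 2 * t * (1 - t) * (x - y)\<^sup>2 \<le> f (t * x + (1 - t) * y))"

definition xk :: "('n \<Rightarrow> real \<Rightarrow> real) \<Rightarrow> real^'n^'m \<Rightarrow> 'n \<Rightarrow> real^'m \<Rightarrow> real" where
  "xk u C k lam = arg_max (\<lambda>x. u k x - x * (lam \<bullet> column k C)) (\<lambda>x. 0 \<le> x)"

definition xvec :: "('n \<Rightarrow> real \<Rightarrow> real) \<Rightarrow> real^'n^'m \<Rightarrow> real^'m \<Rightarrow> real^'n" where
  "xvec u C lam = (\<chi> k. xk u C k lam)"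

definition dual_fun :: "('n::finite \<Rightarrow> real \<Rightarrow> real) \<Rightarrow> real^'n^'m \<Rightarrow> real^'m \<Rightarrow> real^'m \<Rightarrow> real" where
  "dual_fun u C b lam = lam \<bullet> b +
     (\<Sum>k\<in>UNIV. u k (xk u C k lam) - xk u C k lam * (lam \<bullet> column k C))"

definition dual_grad :: "('n::finite \<Rightarrow> real \<Rightarrow> real) \<Rightarrow> real^'n^'m \<Rightarrow> real^'m \<Rightarrow> real^'m \<Rightarrow> real^'m" where
  "dual_grad u C b lam = b - C *v xvec u C lam"

definition pos_part :: "real^'m \<Rightarrow> real^'m" where
  "pos_part v = (\<chi> i. max (v $ i) 0)"

definition nonneg_vec :: "real^'m \<Rightarrow> bool" where
  "nonneg_vec v \<longleftrightarrow> (\<forall>i. 0 \<le> v $ i)"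

end

theory Submission
  imports Defs
begin

text \<open>Each user's surplus \<open>p \<mapsto> max {u\<^sub>k(x) - x p | x \<ge> 0}\<close> lies above its tangent of slope
  \<open>-x\<^sub>k(p)\<close> and, by \<open>\<mu>\<close>-strong concavity of \<open>u\<^sub>k\<close>, below that tangent plus \<open>(\<Delta>p)\<^sup>2/(2\<mu>)\<close>.
  Summing over users, with \<open>\<parallel>C\<^sub>k\<parallel>\<^sup>2 \<le> m\<close>, shows that \<open>\<phi>\<close> lies between its tangents and the
  tangents plus \<open>L/2 \<parallel>\<Delta>\<lambda>\<parallel>\<^sup>2\<close>.

  For the method, Nesterov's estimate function
  \<open>\<psi>\<^sub>t(w) = L/2 \<parallel>w - \<lambda>\<^sup>0\<parallel>\<^sup>2 + \<Sum>j\<le>t. \<alpha>\<^sub>j (\<phi>(\<lambda>\<^sup>j) + \<langle>\<nabla>\<phi>(\<lambda>\<^sup>j), w - \<lambda>\<^sup>j\<rangle>)\<close> is minimised over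
  the orthant by \<open>z\<^sup>t\<close>, with a quadratic margin, and satisfies \<open>A\<^sub>t \<phi>(y\<^sup>t) \<le> \<psi>\<^sub>t(z\<^sup>t)\<close> by induction.
  Since \<open>\<psi>\<^sub>t(\<lambda>\<^sup>*) \<le> A\<^sub>t \<phi>(\<lambda>\<^sup>*) + L/2 \<parallel>\<lambda>\<^sup>* - \<lambda>\<^sup>0\<parallel>\<^sup>2\<close> by convexity and \<open>\<phi>(\<lambda>\<^sup>*) \<le> \<phi>(y\<^sup>t)\<close>,
  the margin at \<open>\<lambda>\<^sup>*\<close> gives \<open>\<parallel>z\<^sup>t - \<lambda>\<^sup>*\<parallel> \<le> \<parallel>\<lambda>\<^sup>0 - \<lambda>\<^sup>*\<parallel>\<close>. A projected gradient step does not
  move away from a minimiser, so \<open>\<parallel>y\<^sup>t - \<lambda>\<^sup>*\<parallel> \<le> \<parallel>\<lambda>\<^sup>t - \<lambda>\<^sup>*\<parallel>\<close>, and \<open>\<lambda>\<^bsup>t+1\<^esup>\<close> is a convex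
  combination of \<open>z\<^sup>t\<close> and \<open>y\<^sup>t\<close>; induction on \<open>t\<close> concludes.\<close>

section \<open>Projection onto the nonnegative orthant\<close>

lemma pos_part_nonneg: "nonneg_vec (pos_part v)"
  by (simp add: nonneg_vec_def pos_part_def)

lemma nonneg_vec_convex_comb:
  assumes "nonneg_vec a" "nonneg_vec b" "0 \<le> t" "t \<le> 1"
  shows "nonneg_vec (t *\<^sub>R a + (1 - t) *\<^sub>R b)"
  using assms by (simp add: nonneg_vec_def)

lemma pos_part_obtuse:
  assumes "nonneg_vec w"
  shows "(v - pos_part v) \<bullet> (w - pos_part v) \<le> 0"
proof -
  have "(v$i - max (v$i) 0) * (w$i - max (v$i) 0) \<le> 0" for i
    using assms by (cases "0 \<le> v$i") (auto simp: nonneg_vec_def mult_nonpos_nonneg)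
  then show ?thesis
    unfolding inner_vec_def pos_part_def by (simp add: sum_nonpos)
qed

text \<open>\<open>z = [a - s/L]\<^sub>+\<close> minimises the \<open>L\<close>-strongly convex function
  \<open>w \<mapsto> L/2 \<parallel>w - a\<parallel>\<^sup>2 + \<langle>s, w\<rangle>\<close> over the orthant, which therefore exceeds its minimum
  by at least \<open>L/2 \<parallel>w - z\<parallel>\<^sup>2\<close>.\<close>
lemma pos_part_step_three_point:
  fixes a s w :: "real^'m"
  assumes L: "0 < L" and w: "nonneg_vec w" and z: "z = pos_part (a - (1/L) *\<^sub>R s)"
  shows "L/2 * (norm (z - a))\<^sup>2 + s \<bullet> z + L/2 * (norm (w - z))\<^sup>2
           \<le> L/2 * (norm (w - a))\<^sup>2 + s \<bullet> w"
proof -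
  define d where "d = w - z"
  define e where "e = z - a"
  have "(a - (1/L) *\<^sub>R s - z) \<bullet> (w - z) \<le> 0"
    using pos_part_obtuse[OF w, of "a - (1/L) *\<^sub>R s"] z by simp
  moreover have "a - (1/L) *\<^sub>R s - z = - e - (1/L) *\<^sub>R s"
    by (simp add: e_def)
  ultimately have "L * (- (e \<bullet> d) - (1/L) * (s \<bullet> d)) \<le> 0"
    using L by (simp add: d_def inner_diff_left mult_nonneg_nonpos)
  then have obtuse: "0 \<le> L * (e \<bullet> d) + s \<bullet> d"
    using L by (simp add: algebra_simps)
  have wa: "w - a = d + e"
    by (simp add: d_def e_def)
  have norm_wa: "(norm (w - a))\<^sup>2 = d \<bullet> d + 2 * (e \<bullet> d) + e \<bullet> e"
    unfolding wa power2_norm_eq_inner by (simp add: inner_add inner_commute)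
  have sw: "s \<bullet> w = s \<bullet> z + s \<bullet> d"
    by (simp add: d_def inner_diff_right)
  have norms: "(norm (z - a))\<^sup>2 = e \<bullet> e" "(norm (w - z))\<^sup>2 = d \<bullet> d"
    by (simp_all add: power2_norm_eq_inner d_def e_def)
  show ?thesis
    unfolding norm_wa sw norms using obtuse by (simp add: field_simps)
qed

lemma projected_gradient_step_le:
  fixes phi :: "real^'m \<Rightarrow> real" and g :: "real^'m \<Rightarrow> real^'m"
  assumes L: "0 < L"
    and below_tangent_quadratic: "\<And>a b. phi b \<le> phi a + g a \<bullet> (b - a) + L/2 * (norm (b - a))\<^sup>2"
    and v: "nonneg_vec v"
  shows "phi (pos_part (l - (1/L) *\<^sub>R g l)) \<le> phi l + g l \<bullet> (v - l) + L/2 * (norm (v - l))\<^sup>2"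
proof -
  define y where "y = pos_part (l - (1/L) *\<^sub>R g l)"
  have "L/2 * (norm (y - l))\<^sup>2 + g l \<bullet> y + L/2 * (norm (v - y))\<^sup>2
          \<le> L/2 * (norm (v - l))\<^sup>2 + g l \<bullet> v"
    by (rule pos_part_step_three_point[OF L v y_def])
  moreover have "phi y \<le> phi l + g l \<bullet> (y - l) + L/2 * (norm (y - l))\<^sup>2"
    by (rule below_tangent_quadratic)
  moreover have "0 \<le> L/2 * (norm (v - y))\<^sup>2"
    using L by simp
  ultimately show ?thesis
    unfolding y_def[symmetric] by (simp add: inner_diff_right)
qed

lemma projected_gradient_step_dist_le:
  fixes phi :: "real^'m \<Rightarrow> real" and g :: "real^'m \<Rightarrow> real^'m"
  assumes L: "0 < L"
    and above_tangent: "\<And>a b. phi a + g a \<bullet> (b - a) \<le> phi b"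
    and below_tangent_quadratic: "\<And>a b. phi b \<le> phi a + g a \<bullet> (b - a) + L/2 * (norm (b - a))\<^sup>2"
    and lstar_nonneg: "nonneg_vec lstar" and lstar_min: "\<forall>l. nonneg_vec l \<longrightarrow> phi lstar \<le> phi l"
  shows "norm (pos_part (l - (1/L) *\<^sub>R g l) - lstar) \<le> norm (l - lstar)"
proof -
  define y where "y = pos_part (l - (1/L) *\<^sub>R g l)"
  have "L/2 * (norm (y - l))\<^sup>2 + g l \<bullet> y + L/2 * (norm (lstar - y))\<^sup>2
          \<le> L/2 * (norm (lstar - l))\<^sup>2 + g l \<bullet> lstar"
    by (rule pos_part_step_three_point[OF L lstar_nonneg y_def])
  moreover have "phi y \<le> phi l + g l \<bullet> (y - l) + L/2 * (norm (y - l))\<^sup>2"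
    by (rule below_tangent_quadratic)
  moreover have "phi l + g l \<bullet> (lstar - l) \<le> phi lstar"
    by (rule above_tangent)
  moreover have "phi lstar \<le> phi y"
    using lstar_min pos_part_nonneg y_def by blast
  ultimately have "L/2 * (norm (lstar - y))\<^sup>2 \<le> L/2 * (norm (lstar - l))\<^sup>2"
    by (simp add: inner_diff_right)
  then have "(norm (lstar - y))\<^sup>2 \<le> (norm (lstar - l))\<^sup>2"
    using L by simp
  then have "norm (lstar - y) \<le> norm (lstar - l)"
    by (rule power2_le_imp_le) simp
  then show ?thesis
    unfolding y_def[symmetric] by (simp add: norm_minus_commute)
qed

section \<open>The fast gradient method on the orthant\<close>

locale orthant_fast_gradient =
  fixes phi :: "real^'m \<Rightarrow> real" and g :: "real^'m \<Rightarrow> real^'m" and L :: real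
    and lam0 :: "real^'m" and lam y z :: "nat \<Rightarrow> real^'m"
  assumes L_pos: "0 < L"
    and above_tangent: "\<And>a b. phi a + g a \<bullet> (b - a) \<le> phi b"
    and below_tangent_quadratic: "\<And>a b. phi b \<le> phi a + g a \<bullet> (b - a) + L/2 * (norm (b - a))\<^sup>2"
    and lam_0: "lam 0 = lam0"
    and y_eq: "\<And>t. y t = pos_part (lam t - (1 / L) *\<^sub>R g (lam t))"
    and z_eq: "\<And>t. z t = pos_part (lam0 - (1 / L) *\<^sub>R
                   (\<Sum>j\<le>t. ((real j + 1) / 2) *\<^sub>R g (lam j)))"
    and lam_Suc: "\<And>t. lam (Suc t) = (2 / (real t + 3)) *\<^sub>R z t + (1 - 2 / (real t + 3)) *\<^sub>R y t"
begin

definition weight :: "nat \<Rightarrow> real" where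
  "weight j = (real j + 1) / 2"

definition weight_sum :: "nat \<Rightarrow> real" where
  "weight_sum t = (real t + 1) * (real t + 2) / 4"

text \<open>Nesterov's estimate function: \<open>z t\<close> is its minimiser over the orthant, and
  \<open>weight_sum t * phi (y t)\<close> stays below its minimum.\<close>
definition estimate :: "nat \<Rightarrow> real^'m \<Rightarrow> real" where
  "estimate t w = L/2 * (norm (w - lam0))\<^sup>2
     + (\<Sum>j\<le>t. weight j * (phi (lam j) + g (lam j) \<bullet> (w - lam j)))"

lemma sum_weight: "(\<Sum>j\<le>t. weight j) = weight_sum t"
  by (induction t) (simp_all add: weight_def weight_sum_def field_simps)

lemma weight_sum_Suc: "weight_sum (Suc t) = weight_sum t + weight (Suc t)"
  by (simp add: weight_def weight_sum_def field_simps)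

lemma weight_sum_lam_Suc:
  "weight_sum (Suc t) *\<^sub>R lam (Suc t) = weight (Suc t) *\<^sub>R z t + weight_sum t *\<^sub>R y t"
proof -
  have "weight_sum (Suc t) * (2 / (real t + 3)) = weight (Suc t)"
    "weight_sum (Suc t) * (1 - 2 / (real t + 3)) = weight_sum t"
    by (simp_all add: weight_def weight_sum_def field_simps)
  then show ?thesis
    by (simp add: lam_Suc scaleR_add_right)
qed

lemma y_nonneg: "nonneg_vec (y t)"
  by (simp add: y_eq pos_part_nonneg)

lemma z_nonneg: "nonneg_vec (z t)"
  by (simp add: z_eq pos_part_nonneg)

lemma z_minimizes_estimate:
  assumes "nonneg_vec w"
  shows "estimate t (z t) + L/2 * (norm (w - z t))\<^sup>2 \<le> estimate t w"
proof -
  define s where "s = (\<Sum>j\<le>t. weight j *\<^sub>R g (lam j))"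
  define c where "c = (\<Sum>j\<le>t. weight j * (phi (lam j) - g (lam j) \<bullet> lam j))"
  have estimate_eq: "estimate t v = L/2 * (norm (v - lam0))\<^sup>2 + s \<bullet> v + c" for v
  proof -
    have "(\<Sum>j\<le>t. weight j * (phi (lam j) + g (lam j) \<bullet> (v - lam j)))
        = (\<Sum>j\<le>t. weight j * (g (lam j) \<bullet> v) + weight j * (phi (lam j) - g (lam j) \<bullet> lam j))"
      by (rule sum.cong) (simp_all add: inner_diff_right algebra_simps)
    then show ?thesis
      by (simp add: estimate_def s_def c_def sum.distrib inner_sum_left)
  qed
  have "z t = pos_part (lam0 - (1/L) *\<^sub>R s)"
    by (simp add: z_eq s_def weight_def)
  from pos_part_step_three_point[OF L_pos assms this] show ?thesis
    unfolding estimate_eq by simp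
qed

lemma estimate_le:
  "estimate t w \<le> L/2 * (norm (w - lam0))\<^sup>2 + weight_sum t * phi w"
proof -
  have "(\<Sum>j\<le>t. weight j * (phi (lam j) + g (lam j) \<bullet> (w - lam j))) \<le> (\<Sum>j\<le>t. weight j * phi w)"
    by (intro sum_mono mult_left_mono above_tangent) (simp add: weight_def)
  then show ?thesis
    by (simp add: estimate_def flip: sum_distrib_right sum_weight)
qed

lemma estimate_Suc_lower:
  assumes IH: "weight_sum t * phi (y t) \<le> estimate t (z t)"
  shows "weight_sum (Suc t) * phi (lam (Suc t))
           + weight (Suc t) * (g (lam (Suc t)) \<bullet> (z (Suc t) - z t))
           + L/2 * (norm (z (Suc t) - z t))\<^sup>2
         \<le> estimate (Suc t) (z (Suc t))"
proof -
  define l where "l = lam (Suc t)"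
  define w where "w = z (Suc t)"
  have combine_vec:
    "weight_sum t *\<^sub>R (y t - l) + weight (Suc t) *\<^sub>R (w - l) = weight (Suc t) *\<^sub>R (w - z t)"
    using weight_sum_lam_Suc[of t] by (simp add: l_def weight_sum_Suc algebra_simps)
  have combine: "weight_sum t * (g l \<bullet> (y t - l)) + weight (Suc t) * (g l \<bullet> (w - l))
                        = weight (Suc t) * (g l \<bullet> (w - z t))"
    using arg_cong[OF combine_vec, of "\<lambda>x. g l \<bullet> x"] by (simp add: inner_add_right)
  have "weight_sum t * (phi l + g l \<bullet> (y t - l)) \<le> weight_sum t * phi (y t)"
    by (intro mult_left_mono above_tangent) (simp add: weight_sum_def)
  moreover have "estimate t (z t) + L/2 * (norm (w - z t))\<^sup>2 \<le> estimate t w"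
    unfolding w_def by (rule z_minimizes_estimate[OF z_nonneg])
  moreover have "estimate (Suc t) w = estimate t w + weight (Suc t) * (phi l + g l \<bullet> (w - l))"
    by (simp add: estimate_def l_def)
  ultimately show ?thesis
    using IH combine weight_sum_Suc[of t] unfolding l_def[symmetric] w_def[symmetric]
    by (simp add: algebra_simps)
qed

text \<open>The gradient step from \<open>lam (Suc t)\<close> is compared with the orthant point
  \<open>\<tau> z (Suc t) + (1 - \<tau>) y t\<close>, \<open>\<tau> = 2 / (t + 3)\<close>; the quadratic term is then absorbed
  because \<open>weight_sum (Suc t) * \<tau>\<^sup>2 = weight (Suc t)\<^sup>2 / weight_sum (Suc t) \<le> 1\<close>.\<close>
lemma y_Suc_upper:
  "weight_sum (Suc t) * phi (y (Suc t))
     \<le> weight_sum (Suc t) * phi (lam (Suc t))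
        + weight (Suc t) * (g (lam (Suc t)) \<bullet> (z (Suc t) - z t))
        + L/2 * (norm (z (Suc t) - z t))\<^sup>2"
proof -
  define \<tau> where "\<tau> = 2 / (real t + 3)"
  define v where "v = \<tau> *\<^sub>R z (Suc t) + (1 - \<tau>) *\<^sub>R y t"
  define P where "P = g (lam (Suc t)) \<bullet> (z (Suc t) - z t)"
  define D where "D = (norm (z (Suc t) - z t))\<^sup>2"
  have tau: "0 \<le> \<tau>" "\<tau> \<le> 1" "weight_sum (Suc t) * \<tau> = weight (Suc t)"
    by (simp_all add: \<tau>_def weight_def weight_sum_def field_simps)
  have v: "nonneg_vec v"
    unfolding v_def by (rule nonneg_vec_convex_comb[OF z_nonneg y_nonneg tau(1,2)])
  have "v - lam (Suc t) = \<tau> *\<^sub>R (z (Suc t) - z t)"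
    by (simp add: v_def lam_Suc \<tau>_def algebra_simps)
  with projected_gradient_step_le[OF L_pos below_tangent_quadratic v, of "lam (Suc t)"]
  have "phi (y (Suc t)) \<le> phi (lam (Suc t)) + \<tau> * P + L/2 * (\<tau>\<^sup>2 * D)"
    by (simp add: y_eq[of "Suc t"] P_def D_def power_mult_distrib)
  then have "weight_sum (Suc t) * phi (y (Suc t))
      \<le> weight_sum (Suc t) * (phi (lam (Suc t)) + \<tau> * P + L/2 * (\<tau>\<^sup>2 * D))"
    by (simp add: weight_sum_def)
  also have "\<dots> = weight_sum (Suc t) * phi (lam (Suc t)) + weight (Suc t) * P
                    + (weight_sum (Suc t) * \<tau>\<^sup>2) * (L/2 * D)"
    using tau(3) by (simp add: power2_eq_square algebra_simps)
  also have "\<dots> \<le> weight_sum (Suc t) * phi (lam (Suc t)) + weight (Suc t) * P + L/2 * D"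
  proof -
    have "weight_sum (Suc t) * \<tau>\<^sup>2 \<le> 1"
      by (simp add: \<tau>_def weight_sum_def power2_eq_square divide_simps) (simp add: algebra_simps)
    moreover have "0 \<le> L/2 * D"
      using L_pos by (simp add: D_def)
    ultimately show ?thesis
      by (intro add_left_mono mult_left_le_one_le) (simp_all add: weight_sum_def)
  qed
  finally show ?thesis
    unfolding P_def D_def .
qed

lemma estimate_invariant: "weight_sum t * phi (y t) \<le> estimate t (z t)"
proof (induction t)
  case 0
  have "phi (y 0) \<le> phi lam0 + g lam0 \<bullet> (z 0 - lam0) + L/2 * (norm (z 0 - lam0))\<^sup>2"
    using projected_gradient_step_le[OF L_pos below_tangent_quadratic z_nonneg] by (simp add: y_eq lam_0)
  moreover have "0 \<le> L/2 * (norm (z 0 - lam0))\<^sup>2"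
    using L_pos by simp
  ultimately show ?case
    by (simp add: estimate_def weight_def weight_sum_def lam_0 add_divide_distrib)
next
  case (Suc t)
  then show ?case
    using estimate_Suc_lower y_Suc_upper order_trans by blast
qed

context
  fixes lstar :: "real^'m"
  assumes lstar_nonneg: "nonneg_vec lstar"
    and lstar_min: "\<forall>l. nonneg_vec l \<longrightarrow> phi lstar \<le> phi l"
begin

lemma z_dist_le: "norm (z t - lstar) \<le> norm (lam0 - lstar)"
proof -
  have "weight_sum t * phi lstar \<le> weight_sum t * phi (y t)"
    using lstar_min y_nonneg by (simp add: mult_left_mono weight_sum_def)
  then have "L/2 * (norm (lstar - z t))\<^sup>2 \<le> L/2 * (norm (lstar - lam0))\<^sup>2"
    using z_minimizes_estimate[OF lstar_nonneg, of t] estimate_le[of t lstar] estimate_invariant[of t]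
    by simp
  then have "(norm (lstar - z t))\<^sup>2 \<le> (norm (lstar - lam0))\<^sup>2"
    using L_pos by simp
  then have "norm (lstar - z t) \<le> norm (lstar - lam0)"
    by (rule power2_le_imp_le) simp
  then show ?thesis
    by (simp add: norm_minus_commute)
qed

lemma y_dist_le_lam_dist: "norm (y t - lstar) \<le> norm (lam t - lstar)"
  using projected_gradient_step_dist_le[OF L_pos above_tangent below_tangent_quadratic
      lstar_nonneg lstar_min]
  by (simp add: y_eq)

lemma lam_dist_le: "norm (lam t - lstar) \<le> norm (lam0 - lstar)"
proof (induction t)
  case 0
  then show ?case by (simp add: lam_0)
next
  case (Suc t)
  define \<tau> where "\<tau> = 2 / (real t + 3)"
  have tau: "0 \<le> \<tau>" "\<tau> \<le> 1"
    by (simp_all add: \<tau>_def)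
  have "lam (Suc t) - lstar = \<tau> *\<^sub>R (z t - lstar) + (1 - \<tau>) *\<^sub>R (y t - lstar)"
    by (simp add: lam_Suc \<tau>_def algebra_simps)
  then have "norm (lam (Suc t) - lstar) \<le> \<tau> * norm (z t - lstar) + (1 - \<tau>) * norm (y t - lstar)"
    using tau by (metis abs_of_nonneg diff_ge_0_iff_ge norm_scaleR norm_triangle_ineq)
  also have "\<dots> \<le> \<tau> * norm (lam0 - lstar) + (1 - \<tau>) * norm (lam0 - lstar)"
    using z_dist_le[of t] y_dist_le_lam_dist[of t] Suc.IH tau
    by (intro add_mono mult_left_mono) auto
  finally show ?case
    by (simp add: algebra_simps)
qed

lemma y_dist_le: "norm (y t - lstar) \<le> norm (lam0 - lstar)"
  using y_dist_le_lam_dist lam_dist_le order_trans by blast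

end

end

section \<open>Strongly concave utilities\<close>

lemma strongly_concave_on_minus_linear:
  assumes "strongly_concave_on S \<mu> f"
  shows "strongly_concave_on S \<mu> (\<lambda>x. f x - x * p)"
  using assms unfolding strongly_concave_on_def by (simp add: algebra_simps)

lemma strongly_concave_growth:
  assumes conc: "strongly_concave_on {0..} \<mu> f" and x: "1 \<le> x"
  shows "f x \<le> f 0 + x * (f 1 - f 0) - \<mu>/2 * x * (x - 1)"
proof -
  have "(1/x) * f x + (1 - 1/x) * f 0 + \<mu>/2 * (x - 1)
          = (1/x) * f x + (1 - 1/x) * f 0 + \<mu>/2 * (1/x) * (1 - 1/x) * (x - 0)\<^sup>2"
    using x by (simp add: field_simps power2_eq_square)
  also have "\<dots> \<le> f ((1/x) * x + (1 - 1/x) * 0)"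
    using x by (intro conc[unfolded strongly_concave_on_def, rule_format]) auto
  also have "(1/x) * x + (1 - 1/x) * 0 = 1"
    using x by simp
  finally have "(1/x) * f x + (1 - 1/x) * f 0 + \<mu>/2 * (x - 1) \<le> f 1" .
  then have "x * ((1/x) * f x + (1 - 1/x) * f 0 + \<mu>/2 * (x - 1)) \<le> x * f 1"
    using x by (simp add: mult_left_mono)
  moreover have "x \<noteq> 0"
    using x by simp
  ultimately show ?thesis
    by (simp add: algebra_simps)
qed

lemma strongly_concave_attains_max:
  fixes f :: "real \<Rightarrow> real"
  assumes cont: "continuous_on {0..} f" and conc: "strongly_concave_on {0..} \<mu> f" and mu: "0 < \<mu>"
  shows "\<exists>x\<ge>0. \<forall>y\<ge>0. f y \<le> f x"
proof -
  define R where "R = 1 + 2 * \<bar>f 1 - f 0\<bar> / \<mu>"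
  have R: "1 \<le> R"
    using mu by (simp add: R_def)
  have cont_R: "continuous_on {0..R} f"
    by (rule continuous_on_subset[OF cont]) auto
  obtain x where x: "x \<in> {0..R}" "\<forall>y\<in>{0..R}. f y \<le> f x"
    using continuous_attains_sup[OF compact_Icc _ cont_R] R by auto
  have "f y \<le> f x" if y: "0 \<le> y" for y
  proof (cases "y \<le> R")
    case True
    then show ?thesis using x y by auto
  next
    case False
    have "\<bar>f 1 - f 0\<bar> = \<mu>/2 * (R - 1)"
      using mu by (simp add: R_def)
    also have "\<dots> \<le> \<mu>/2 * (y - 1)"
      using False mu by simp
    finally have "y * (f 1 - f 0 - \<mu>/2 * (y - 1)) \<le> 0"
      using y abs_ge_self[of "f 1 - f 0"] by (intro mult_nonneg_nonpos) linarith+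
    then have "f y \<le> f 0"
      using strongly_concave_growth[OF conc, of y] False R by (simp add: algebra_simps)
    also have "f 0 \<le> f x"
      using x R by auto
    finally show ?thesis .
  qed
  then show ?thesis
    using x by auto
qed

text \<open>Without differentiability, the first-order optimality argument is replaced by moving
  from \<open>x\<close> towards \<open>y\<close> by an arbitrarily small fraction.\<close>
lemma strongly_concave_max_quadratic_gap:
  assumes conc: "strongly_concave_on {0..} \<mu> f"
    and x: "0 \<le> x" and xmax: "\<forall>y\<ge>0. f y \<le> f x" and y: "0 \<le> y"
  shows "f y \<le> f x - \<mu>/2 * (y - x)\<^sup>2"
proof -
  have "s * (\<mu>/2 * (y - x)\<^sup>2) \<le> f x - f y" if s: "0 < s" "s < 1" for s
  proof -
    define t where "t = 1 - s"
    have t: "0 < t" "t \<le> 1"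
      using s by (simp_all add: t_def)
    have "t * f y + (1 - t) * f x + \<mu>/2 * t * (1 - t) * (y - x)\<^sup>2 \<le> f (t * y + (1 - t) * x)"
      using conc x y t unfolding strongly_concave_on_def by auto
    also have "\<dots> \<le> f x"
      using xmax x y t by simp
    finally have "t * (s * (\<mu>/2 * (y - x)\<^sup>2) - (f x - f y)) \<le> t * 0"
      by (simp add: t_def algebra_simps)
    then have "s * (\<mu>/2 * (y - x)\<^sup>2) - (f x - f y) \<le> 0"
      using t by (simp only: mult_zero_right mult_le_0_iff) linarith
    then show ?thesis
      by linarith
  qed
  then have "\<mu>/2 * (y - x)\<^sup>2 \<le> f x - f y"
    by (rule field_le_mult_one_interval)
  then show ?thesis
    by simp
qed

text \<open>The paper's \<open>x\<^sub>k(\<lambda>)\<close> is \<open>demand (u k) \<langle>\<lambda>, C\<^sub>k\<rangle>\<close>, and the dual function is a sum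
  of surpluses.\<close>
definition demand :: "(real \<Rightarrow> real) \<Rightarrow> real \<Rightarrow> real" where
  "demand f p = arg_max (\<lambda>x. f x - x * p) (\<lambda>x. 0 \<le> x)"

definition surplus :: "(real \<Rightarrow> real) \<Rightarrow> real \<Rightarrow> real" where
  "surplus f p = f (demand f p) - demand f p * p"

context
  fixes f :: "real \<Rightarrow> real" and \<mu> :: real
  assumes cont: "continuous_on {0..} f"
    and conc: "strongly_concave_on {0..} \<mu> f"
    and mu: "0 < \<mu>"
begin

lemma demand_maximizes:
  "0 \<le> demand f p \<and> (\<forall>y\<ge>0. f y - y * p \<le> surplus f p)"
proof -
  have "continuous_on {0..} (\<lambda>x. f x - x * p)"
    by (intro continuous_intros cont)
  then obtain x where x: "x \<ge> 0" "\<forall>y\<ge>0. f y - y * p \<le> f x - x * p"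
    using strongly_concave_attains_max[OF _ strongly_concave_on_minus_linear[OF conc] mu] by blast
  show ?thesis
    unfolding surplus_def demand_def
    by (rule arg_maxI[where x = x]) (use x in \<open>auto simp: not_less\<close>)
qed

text \<open>\<open>surplus f\<close> is convex with derivative \<open>- demand f\<close>, which is \<open>1/\<mu>\<close>-Lipschitz.\<close>
lemma surplus_above_tangent: "surplus f p - demand f p * (p' - p) \<le> surplus f p'"
  using demand_maximizes[of p] demand_maximizes[of p'] by (auto simp: surplus_def algebra_simps)

lemma surplus_below_tangent_quadratic:
  "surplus f p' \<le> surplus f p - demand f p * (p' - p) + (p' - p)\<^sup>2 / (2 * \<mu>)"
proof -
  define x x' d where "x = demand f p" and "x' = demand f p'" and "d = x' - x"
  have "f x' - x' * p \<le> surplus f p - \<mu>/2 * d\<^sup>2"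
    using strongly_concave_max_quadratic_gap[OF strongly_concave_on_minus_linear[OF conc]]
      demand_maximizes[of p] demand_maximizes[of p']
    by (simp add: x_def x'_def d_def surplus_def)
  moreover have "0 \<le> (\<mu> * d + (p' - p))\<^sup>2 / (2 * \<mu>)"
    using mu by simp
  moreover have "(\<mu> * d + (p' - p))\<^sup>2 / (2 * \<mu>) = \<mu>/2 * d\<^sup>2 + d * (p' - p) + (p' - p)\<^sup>2 / (2 * \<mu>)"
    using mu by (simp add: field_simps power2_eq_square)
  ultimately show ?thesis
    by (simp add: surplus_def x_def x'_def d_def algebra_simps)
qed

end

section \<open>Smoothness of the dual function\<close>

lemma inner_matrix_vector_mult:
  "(C *v x) \<bullet> v = (\<Sum>k\<in>UNIV. x $ k * (v \<bullet> column k C))"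
proof -
  have "(C *v x) \<bullet> v = (\<Sum>i\<in>UNIV. \<Sum>j\<in>UNIV. C$i$j * x$j * v$i)"
    by (simp add: inner_vec_def matrix_vector_mult_def sum_distrib_right)
  also have "\<dots> = (\<Sum>j\<in>UNIV. \<Sum>i\<in>UNIV. C$i$j * x$j * v$i)"
    by (rule sum.swap)
  also have "\<dots> = (\<Sum>k\<in>UNIV. x $ k * (v \<bullet> column k C))"
    by (simp add: inner_vec_def column_def sum_distrib_left algebra_simps)
  finally show ?thesis .
qed

lemma inner_column_01_sq_le:
  fixes C :: "real^'n^'m::finite"
  assumes C01: "\<forall>i k. C $ i $ k \<in> {0, 1}"
  shows "(v \<bullet> column k C)\<^sup>2 \<le> real CARD('m) * (norm v)\<^sup>2"
proof -
  have "(norm (column k C))\<^sup>2 = (\<Sum>i\<in>UNIV. (C $ i $ k)\<^sup>2)"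
    unfolding power2_norm_eq_inner inner_vec_def column_def by (simp add: power2_eq_square)
  also have "\<dots> \<le> (\<Sum>i\<in>(UNIV::'m set). 1)"
  proof (rule sum_mono)
    fix i
    have "C $ i $ k = 0 \<or> C $ i $ k = 1"
      using C01 by auto
    then show "(C $ i $ k)\<^sup>2 \<le> 1"
      by auto
  qed
  finally have "(norm (column k C))\<^sup>2 \<le> real CARD('m)"
    by simp
  moreover have "(v \<bullet> column k C)\<^sup>2 \<le> (norm v)\<^sup>2 * (norm (column k C))\<^sup>2"
    using Cauchy_Schwarz_ineq[of v "column k C"] by (simp add: power2_norm_eq_inner)
  ultimately show ?thesis
    by (smt (verit) mult.commute mult_left_mono zero_le_power2)
qed

lemma dual_fun_eq_surplus:
  "dual_fun u C b l = l \<bullet> b + (\<Sum>k\<in>UNIV. surplus (u k) (l \<bullet> column k C))"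
  by (simp add: dual_fun_def surplus_def demand_def xk_def)

lemma dual_grad_inner:
  "dual_grad u C b l \<bullet> v = b \<bullet> v - (\<Sum>k\<in>UNIV. demand (u k) (l \<bullet> column k C) * (v \<bullet> column k C))"
  by (simp add: dual_grad_def inner_diff_left inner_matrix_vector_mult xvec_def xk_def demand_def)

context
  fixes u :: "'n::finite \<Rightarrow> real \<Rightarrow> real" and \<mu> :: real
  assumes ucont: "\<forall>k. continuous_on {0..} (u k)"
    and uconc: "\<forall>k. strongly_concave_on {0..} \<mu> (u k)"
    and mu: "0 < \<mu>"
begin

lemma dual_fun_above_tangent:
  fixes C :: "real^'n^'m::finite"
  shows "dual_fun u C b l + dual_grad u C b l \<bullet> (l' - l) \<le> dual_fun u C b l'"
proof -
  have "(\<Sum>k\<in>UNIV. surplus (u k) (l \<bullet> column k C)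
            - demand (u k) (l \<bullet> column k C) * ((l' - l) \<bullet> column k C))
        \<le> (\<Sum>k\<in>UNIV. surplus (u k) (l' \<bullet> column k C))"
  proof (rule sum_mono)
    fix k
    show "surplus (u k) (l \<bullet> column k C) - demand (u k) (l \<bullet> column k C) * ((l' - l) \<bullet> column k C)
            \<le> surplus (u k) (l' \<bullet> column k C)"
      using surplus_above_tangent[of "u k" \<mu>] ucont uconc mu by (simp add: inner_diff_left)
  qed
  then show ?thesis
    unfolding dual_fun_eq_surplus dual_grad_inner
    by (simp add: sum_subtractf inner_diff_right inner_commute)
qed

lemma dual_fun_below_tangent_quadratic:
  fixes C :: "real^'n^'m::finite"
  assumes C01: "\<forall>i k. C $ i $ k \<in> {0, 1}"
  shows "dual_fun u C b l' \<le> dual_fun u C b l + dual_grad u C b l \<bullet> (l' - l)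
           + (real CARD('n) * (real CARD('m))\<^sup>2 / \<mu>) / 2 * (norm (l' - l))\<^sup>2"
proof -
  define v where "v = l' - l"
  have "(\<Sum>k\<in>UNIV. surplus (u k) (l' \<bullet> column k C))
        \<le> (\<Sum>k\<in>UNIV. surplus (u k) (l \<bullet> column k C)
              - demand (u k) (l \<bullet> column k C) * (v \<bullet> column k C)
              + (v \<bullet> column k C)\<^sup>2 / (2 * \<mu>))"
  proof (rule sum_mono)
    fix k
    show "surplus (u k) (l' \<bullet> column k C)
            \<le> surplus (u k) (l \<bullet> column k C) - demand (u k) (l \<bullet> column k C) * (v \<bullet> column k C)
               + (v \<bullet> column k C)\<^sup>2 / (2 * \<mu>)"
      using surplus_below_tangent_quadratic[of "u k" \<mu>] ucont uconc mu by (simp add: v_def inner_diff_left)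
  qed
  moreover have "(\<Sum>k\<in>UNIV. (v \<bullet> column k C)\<^sup>2 / (2 * \<mu>))
                   \<le> (\<Sum>k\<in>(UNIV::'n set). real CARD('m) * (norm v)\<^sup>2 / (2 * \<mu>))"
    using inner_column_01_sq_le[OF C01] mu by (intro sum_mono divide_right_mono) auto
  moreover have "real CARD('n) * (real CARD('m) * (norm v)\<^sup>2 / (2 * \<mu>))
                   \<le> (real CARD('n) * (real CARD('m))\<^sup>2 / \<mu>) / 2 * (norm v)\<^sup>2"
  proof -
    \<comment> \<open>Only here is \<open>m \<le> m\<^sup>2\<close> used: \<open>n m / \<mu>\<close> would already be a smoothness constant.\<close>
    have "real CARD('m) * (norm v)\<^sup>2 \<le> (real CARD('m))\<^sup>2 * (norm v)\<^sup>2"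
      by (intro mult_right_mono) (simp_all add: power2_eq_square)
    then have "real CARD('n) * (real CARD('m) * (norm v)\<^sup>2 / (2 * \<mu>))
                 \<le> real CARD('n) * ((real CARD('m))\<^sup>2 * (norm v)\<^sup>2 / (2 * \<mu>))"
      using mu by (intro mult_left_mono divide_right_mono) auto
    also have "\<dots> = (real CARD('n) * (real CARD('m))\<^sup>2 / \<mu>) / 2 * (norm v)\<^sup>2"
      by (simp add: field_simps)
    finally show ?thesis .
  qed
  ultimately show ?thesis
    unfolding dual_fun_eq_surplus dual_grad_inner v_def[symmetric]
    by (simp add: sum.distrib sum_subtractf v_def inner_diff_right inner_commute)
qed

end

theorem mainTheorem3:
  fixes C :: "real^'n::finite^'m::finite"
    and b :: "real^'m"
    and u :: "'n \<Rightarrow> real \<Rightarrow> real"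
    and \<mu> L :: real
    and lamstar lam0 :: "real^'m"
    and lam y z :: "nat \<Rightarrow> real^'m"
  assumes C01: "\<forall>i k. C $ i $ k \<in> {0, 1}"
    and Ccols: "\<forall>k. column k C \<noteq> 0"
    and bpos: "\<forall>i. 0 < b $ i"
    and mupos: "0 < \<mu>"
    and ucont: "\<forall>k. continuous_on {0..} (u k)"
    and uconc: "\<forall>k. strongly_concave_on {0..} \<mu> (u k)"
    and Ldef: "L = real CARD('n) * (real CARD('m))\<^sup>2 / \<mu>"
    and star_nonneg: "nonneg_vec lamstar"
    and star_min: "\<forall>l. nonneg_vec l \<longrightarrow> dual_fun u C b lamstar \<le> dual_fun u C b l"
    and lam0_nonneg: "nonneg_vec lam0"
    and init: "lam 0 = lam0"
    and y_def: "\<forall>t. y t = pos_part (lam t - (1 / L) *\<^sub>R dual_grad u C b (lam t))"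
    and z_def: "\<forall>t. z t = pos_part (lam0 - (1 / L) *\<^sub>R
                   (\<Sum>j\<le>t. ((real j + 1) / 2) *\<^sub>R dual_grad u C b (lam j)))"
    and step: "\<forall>t. lam (Suc t) = (2 / (real t + 3)) *\<^sub>R z t + (1 - 2 / (real t + 3)) *\<^sub>R y t"
  shows "\<forall>t. norm (z t - lamstar) \<le> norm (lam0 - lamstar)
            \<and> norm (y t - lamstar) \<le> norm (lam0 - lamstar)
            \<and> norm (lam t - lamstar) \<le> norm (lam0 - lamstar)"
proof -
  interpret orthant_fast_gradient "dual_fun u C b" "dual_grad u C b" L lam0 lam y z
  proof
    show "0 < L"
      using mupos by (simp add: Ldef)
    show "dual_fun u C b l + dual_grad u C b l \<bullet> (l' - l) \<le> dual_fun u C b l'" for l l'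
      by (rule dual_fun_above_tangent[OF ucont uconc mupos])
    show "dual_fun u C b l' \<le> dual_fun u C b l + dual_grad u C b l \<bullet> (l' - l) + L/2 * (norm (l' - l))\<^sup>2"
      for l l'
      unfolding Ldef by (rule dual_fun_below_tangent_quadratic[OF ucont uconc mupos C01])
  qed (use init y_def z_def step in auto)
  show ?thesis
    using z_dist_le y_dist_le lam_dist_le star_nonneg star_min by blast
qed

end
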